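(* Let $b>0$ and $\beta>0$. Let $X$ be the set of all $\gamma\in C([0,b])$ which are continuously differentiable on $(0,b]$, with $\gamma(t)>0$ for all $t\in(0,b]$, $\gamma(0)=0$, $\gamma(b)=\beta$, and such that the improper integral $$\mathcal{L}(\gamma)=\int_0^b\left(\frac{1+\gamma'(t)^2}{\gamma(t)}\right)^{1/2}dt$$ is defined (finite). Let $\gamma$ be a minimum of $\mathcal{L}$ on $X$. Then: (a) $\lim_{t\to 0^+}\gamma'(t)=\infty$; (b) $\gamma$ is not constant on any interval; (c) $\gamma$ has at most one critical point, which is a maximum; (d) $\gamma$ is either strictly increasing, or is strictly increasing, reaches a maximum and then is strictly decreasing; (e) $\gamma'$ is strictly decreasing on $(0,b)$. *)

theory Defs
  imports "HOL-Analysis.Analysis"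
begin

definition dcurve :: "real \<Rightarrow> (real \<Rightarrow> real) \<Rightarrow> real \<Rightarrow> real" where
  "dcurve b \<gamma> t = vector_derivative \<gamma> (at t within {0..b})"

definition Lintegrand :: "real \<Rightarrow> (real \<Rightarrow> real) \<Rightarrow> real \<Rightarrow> real" where
  "Lintegrand b \<gamma> t = sqrt ((1 + (dcurve b \<gamma> t)\<^sup>2) / \<gamma> t)"

definition improper_integral_exists :: "real \<Rightarrow> (real \<Rightarrow> real) \<Rightarrow> bool" where
  "improper_integral_exists b f \<longleftrightarrow>
     (\<forall>s\<in>{0<..b}. f integrable_on {s..b}) \<and>
     (\<exists>I. ((\<lambda>s. integral {s..b} f) \<longlongrightarrow> I) (at_right 0))"

definition Lfun :: "real \<Rightarrow> (real \<Rightarrow> real) \<Rightarrow> real" where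
  "Lfun b \<gamma> = Lim (at_right 0) (\<lambda>s. integral {s..b} (Lintegrand b \<gamma>))"

definition admissible :: "real \<Rightarrow> real \<Rightarrow> (real \<Rightarrow> real) \<Rightarrow> bool" where
  "admissible b \<beta> \<gamma> \<longleftrightarrow>
     continuous_on {0..b} \<gamma> \<and>
     (\<forall>t\<in>{0<..b}. \<gamma> differentiable (at t within {0..b})) \<and>
     continuous_on {0<..b} (dcurve b \<gamma>) \<and>
     (\<forall>t\<in>{0<..b}. \<gamma> t > 0) \<and> \<gamma> 0 = 0 \<and> \<gamma> b = \<beta> \<and>
     improper_integral_exists b (Lintegrand b \<gamma>)"

end

theory Submission
  imports Defs
begin

text \<open>With \<open>F(y, p) = \<surd>((1 + p\<^sup>2) / y)\<close>, perturbations \<open>\<gamma> + \<epsilon>\<phi>\<close> by test functions supported in a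
  compact subinterval of \<open>(0, b)\<close> stay admissible and change \<open>\<L>\<close> only there, so the first variation
  vanishes, and the du Bois-Reymond lemma yields the Euler-Lagrange equation \<open>(F\<^sub>p)' = F\<^sub>y\<close> along \<open>\<gamma>\<close>.
  Beltrami's first integral \<open>F - \<gamma>' F\<^sub>p\<close> is then constant, i.e. \<open>\<gamma> (1 + \<gamma>'\<^sup>2) = C > 0\<close>, so
  \<open>\<gamma>' = \<surd>C F\<^sub>p\<close> is strictly decreasing because \<open>(F\<^sub>p)' = F\<^sub>y < 0\<close>. As \<open>\<gamma> \<rightarrow> 0\<close> at \<open>0\<close>,
  \<open>\<gamma>'\<^sup>2 = C / \<gamma> - 1 \<rightarrow> \<infinity>\<close>; the shape of \<open>\<gamma>\<close> follows from the strict monotonicity of \<open>\<gamma>'\<close>.\<close>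

definition lagrangian :: "real \<Rightarrow> real \<Rightarrow> real" where
  "lagrangian y p = sqrt ((1 + p\<^sup>2) / y)"

text \<open>The partial derivatives of \<open>lagrangian\<close>, simplified for \<open>y > 0\<close>.\<close>

definition lagrangian_dy :: "real \<Rightarrow> real \<Rightarrow> real" where
  "lagrangian_dy y p = - lagrangian y p / (2 * y)"

definition lagrangian_dp :: "real \<Rightarrow> real \<Rightarrow> real" where
  "lagrangian_dp y p = p * lagrangian y p / (1 + p\<^sup>2)"

lemma one_plus_square_pos: "1 + (p::real)\<^sup>2 > 0"
  by (simp add: add_pos_nonneg)

lemma lagrangian_pos: "y > 0 \<Longrightarrow> lagrangian y p > 0"
  unfolding lagrangian_def by (simp add: one_plus_square_pos)

lemma lagrangian_sq: "y > 0 \<Longrightarrow> (lagrangian y p)\<^sup>2 = (1 + p\<^sup>2) / y"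
  unfolding lagrangian_def by (simp add: one_plus_square_pos less_imp_le)

lemma Lintegrand_eq_lagrangian: "Lintegrand b \<gamma> t = lagrangian (\<gamma> t) (dcurve b \<gamma> t)"
  unfolding Lintegrand_def lagrangian_def ..

lemma
  assumes "continuous_on S f" "continuous_on S g" "\<And>x. x \<in> S \<Longrightarrow> f x > 0"
  shows continuous_on_lagrangian [continuous_intros]:
      "continuous_on S (\<lambda>x. lagrangian (f x) (g x))"
    and continuous_on_lagrangian_dy [continuous_intros]:
      "continuous_on S (\<lambda>x. lagrangian_dy (f x) (g x))"
    and continuous_on_lagrangian_dp [continuous_intros]:
      "continuous_on S (\<lambda>x. lagrangian_dp (f x) (g x))"
proof -
  have ne: "f x \<noteq> 0" "1 + (g x)\<^sup>2 \<noteq> 0" if "x \<in> S" for x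
    using assms(3)[OF that] one_plus_square_pos[of "g x"] by auto
  show L: "continuous_on S (\<lambda>x. lagrangian (f x) (g x))"
    unfolding lagrangian_def using assms(1,2) ne by (intro continuous_intros) auto
  show "continuous_on S (\<lambda>x. lagrangian_dy (f x) (g x))"
    unfolding lagrangian_dy_def using assms(1,2) L ne by (intro continuous_intros) auto
  show "continuous_on S (\<lambda>x. lagrangian_dp (f x) (g x))"
    unfolding lagrangian_dp_def using assms(1,2) L ne by (intro continuous_intros) auto
qed

lemma lagrangian_has_derivative_along_line:
  assumes "y + e * u > 0"
  shows "((\<lambda>e. lagrangian (y + e * u) (p + e * v)) has_field_derivative
      lagrangian_dy (y + e * u) (p + e * v) * u + lagrangian_dp (y + e * u) (p + e * v) * v)
      (at e within U)"
proof -
  define Y P where "Y = y + e * u" and "P = p + e * v"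
  define L Q where "L = lagrangian Y P" and "Q = 1 + P\<^sup>2"
  have Y: "Y > 0" using assms by (simp add: Y_def)
  have Q: "Q > 0" unfolding Q_def by (rule one_plus_square_pos)
  have L: "L > 0" "L * L = Q / Y"
    using lagrangian_pos[OF Y] lagrangian_sq[OF Y] by (auto simp: L_def Q_def power2_eq_square)
  have "Q / Y > 0" using Q Y by simp
  then have der: "((\<lambda>e. lagrangian (y + e * u) (p + e * v)) has_field_derivative
      inverse L / 2 * ((2 * P * v * Y - Q * u) / (Y * Y))) (at e within U)"
    unfolding lagrangian_def L_def Q_def Y_def P_def by (auto intro!: derivative_eq_intros)
  have inv: "inverse L = L * Y / Q"
    using L Y Q by (simp add: field_simps)
  have "inverse L / 2 * ((2 * P * v * Y - Q * u) / (Y * Y))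
      = lagrangian_dy Y P * u + lagrangian_dp Y P * v"
    unfolding inv lagrangian_dy_def lagrangian_dp_def L_def[symmetric] Q_def[symmetric] using Y Q
    by (simp add: field_simps)
  from der[unfolded this] show ?thesis unfolding Y_def P_def .
qed

lemma lagrangian_dy_neg: "y > 0 \<Longrightarrow> lagrangian_dy y p < 0"
  unfolding lagrangian_dy_def using lagrangian_pos[of y p] by simp

lemma lagrangian_dy_mult_dp: "y > 0 \<Longrightarrow> lagrangian_dy y p * lagrangian_dp y p = - p / (2 * y\<^sup>2)"
proof -
  assume y: "y > 0"
  define L Q where "L = lagrangian y p" and "Q = 1 + p\<^sup>2"
  have Q: "Q > 0" unfolding Q_def by (rule one_plus_square_pos)
  have LL: "L * L = Q / y" using lagrangian_sq[OF y] by (simp add: L_def Q_def power2_eq_square)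
  have "lagrangian_dy y p * lagrangian_dp y p = - p * (L * L) / (2 * y * Q)"
    unfolding lagrangian_dy_def lagrangian_dp_def L_def[symmetric] Q_def[symmetric] using y Q
    by (simp add: field_simps)
  also have "\<dots> = - p / (2 * y\<^sup>2)"
    unfolding LL using y Q by (simp add: field_simps power2_eq_square)
  finally show ?thesis .
qed

lemma inverse_minus_lagrangian_dp_sq:
  "y > 0 \<Longrightarrow> inverse y - (lagrangian_dp y p)\<^sup>2 = 1 / (y * (1 + p\<^sup>2))"
proof -
  assume y: "y > 0"
  define L Q where "L = lagrangian y p" and "Q = 1 + p\<^sup>2"
  have Q: "Q > 0" unfolding Q_def by (rule one_plus_square_pos)
  have LL: "L * L = Q / y" using lagrangian_sq[OF y] by (simp add: L_def Q_def power2_eq_square)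
  have "inverse y - (lagrangian_dp y p)\<^sup>2 = inverse y - p\<^sup>2 * (L * L) / (Q * Q)"
    unfolding lagrangian_dp_def L_def[symmetric] Q_def[symmetric] using Q
    by (simp add: field_simps power2_eq_square)
  also have "\<dots> = (Q - p\<^sup>2) / (y * Q)"
    unfolding LL using y Q by (simp add: field_simps power2_eq_square)
  finally show ?thesis by (simp add: Q_def)
qed

lemma lagrangian_dp_mult_sqrt: "y > 0 \<Longrightarrow> lagrangian_dp y p * sqrt (y * (1 + p\<^sup>2)) = p"
proof -
  assume y: "y > 0"
  have "lagrangian y p * sqrt (y * (1 + p\<^sup>2)) = sqrt ((1 + p\<^sup>2)\<^sup>2)"
    unfolding lagrangian_def real_sqrt_mult[symmetric] using y by (simp add: power2_eq_square)
  then have "lagrangian y p * sqrt (y * (1 + p\<^sup>2)) = 1 + p\<^sup>2"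
    using one_plus_square_pos[of p] by simp
  then have "lagrangian_dp y p * sqrt (y * (1 + p\<^sup>2)) = p * (1 + p\<^sup>2) / (1 + p\<^sup>2)"
    unfolding lagrangian_dp_def by (simp add: mult.assoc)
  then show ?thesis using one_plus_square_pos[of p] by simp
qed

lemma antiderivative_vanishing_outside:
  fixes g :: "real \<Rightarrow> real"
  assumes g: "continuous_on UNIV g" and g0: "\<And>t. t \<notin> {c<..<d} \<Longrightarrow> g t = 0"
    and mean: "integral {c..d} g = 0" and cd: "c \<le> d"
  obtains \<phi> where "\<And>t. (\<phi> has_real_derivative g t) (at t)" "\<And>t. t \<notin> {c<..<d} \<Longrightarrow> \<phi> t = 0"
proof
  define a where "a = c - 1"
  define \<phi> where "\<phi> x = integral {a..x} g" for x
  have int: "g integrable_on {x..y}" for x y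
    by (rule integrable_continuous_real) (rule continuous_on_subset[OF g], simp)
  have left: "\<phi> x = 0" if "x \<le> c" for x
  proof -
    have "\<phi> x = integral {a..x} (\<lambda>_. 0)"
      unfolding \<phi>_def by (rule integral_cong) (use that g0 in auto)
    then show ?thesis by simp
  qed
  show "\<phi> t = 0" if "t \<notin> {c<..<d}" for t
  proof (cases "t \<le> c")
    case False
    then have t: "d \<le> t" using that by auto
    have "integral {d..t} g = integral {d..t} (\<lambda>_. 0)"
      by (rule integral_cong) (use g0 in auto)
    then have "integral {d..t} g = 0" by simp
    moreover have "integral {a..c} g + integral {c..d} g + integral {d..t} g = \<phi> t"
      unfolding \<phi>_def using a_def cd t int
      by (simp add: Henstock_Kurzweil_Integration.integral_combine)
    ultimately show ?thesis using left[of c] mean unfolding \<phi>_def by simp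
  qed (use left in auto)
  show "(\<phi> has_real_derivative g t) (at t)" for t
  proof (cases "a < t")
    case True
    have "(\<phi> has_real_derivative g t) (at t within {a..t+1})"
      unfolding \<phi>_def by (rule integral_has_real_derivative) (use g True in \<open>auto intro: continuous_on_subset\<close>)
    then show ?thesis using at_within_Icc_at[of a t "t+1"] True by simp
  next
    case False
    then have "t < c" by (simp add: a_def)
    have "((\<lambda>_. 0) has_real_derivative g t) (at t)"
      using g0[of t] \<open>t < c\<close> by simp
    then show ?thesis
      by (rule has_field_derivative_transform_within_open[of _ _ _ "{..<c}"]) (use \<open>t < c\<close> left in auto)
  qed
qed

definition bump :: "real \<Rightarrow> real \<Rightarrow> real \<Rightarrow> real" where
  "bump c d t = max 0 ((t - c) * (d - t))"

lemma continuous_on_bump [continuous_intros]: "continuous_on S (bump c d)"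
  unfolding bump_def by (intro continuous_intros)

lemma bump_nonneg: "bump c d t \<ge> 0"
  unfolding bump_def by simp

lemma bump_pos: "t \<in> {c<..<d} \<Longrightarrow> bump c d t > 0"
  unfolding bump_def by simp

lemma bump_eq_0:
  assumes "c \<le> d" "t \<notin> {c<..<d}" shows "bump c d t = 0"
proof -
  have "(t - c) * (d - t) \<le> 0"
    using assms by (auto intro: mult_nonpos_nonneg mult_nonneg_nonpos)
  then show ?thesis unfolding bump_def by simp
qed

lemma integral_bump_pos:
  assumes "c < d" shows "integral {c..d} (bump c d) > 0"
proof -
  have "integral {c..d} (bump c d) \<ge> 0"
    by (rule Henstock_Kurzweil_Integration.integral_nonneg)
      (auto intro: integrable_continuous_real continuous_on_bump bump_nonneg)
  moreover have "integral {c..d} (bump c d) \<noteq> 0"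
  proof
    assume "integral {c..d} (bump c d) = 0"
    then have "\<forall>t\<in>{c..d}. bump c d t = 0"
      using integral_eq_0_iff[of c d "bump c d"] assms bump_nonneg continuous_on_bump by auto
    then have "bump c d ((c + d) / 2) = 0"
      using assms by simp
    then show False using bump_pos[of "(c + d) / 2" c d] assms by simp
  qed
  ultimately show ?thesis by simp
qed

lemma const_if_orthogonal_to_zero_mean:
  fixes H :: "real \<Rightarrow> real"
  assumes cd: "c < d" and H: "continuous_on {c..d} H"
    and orth: "\<And>g. continuous_on UNIV g \<Longrightarrow> (\<And>t. t \<notin> {c<..<d} \<Longrightarrow> g t = 0) \<Longrightarrow>
      integral {c..d} g = 0 \<Longrightarrow> integral {c..d} (\<lambda>t. H t * g t) = 0"
  obtains k where "\<And>t. t \<in> {c<..<d} \<Longrightarrow> H t = k"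
proof -
  define w where "w = bump c d"
  define k where "k = integral {c..d} (\<lambda>t. H t * w t) / integral {c..d} w"
  \<comment> \<open>Testing with \<open>(H - k) w\<close>, \<open>k\<close> the \<open>w\<close>-weighted mean of \<open>H\<close>, gives \<open>\<integral> (H - k)\<^sup>2 w = 0\<close>;
    clamping the argument of \<open>H\<close> makes the test function continuous on the line.\<close>
  define g where "g t = (H (max c (min d t)) - k) * w t" for t
  have wc: "continuous_on {c..d} w" unfolding w_def by (intro continuous_intros)
  have gc: "continuous_on UNIV g" unfolding g_def w_def
    by (intro continuous_intros continuous_on_compose2[OF H]) (use cd in auto)
  have g_cd: "g t = (H t - k) * w t" if "t \<in> {c..d}" for t
    using that unfolding g_def by simp
  have g0: "g t = 0" if "t \<notin> {c<..<d}" for t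
    using that cd bump_eq_0[of c d t] unfolding g_def w_def by simp
  have int: "f integrable_on {c..d}" if "continuous_on {c..d} f" for f :: "real \<Rightarrow> real"
    using that by (rule integrable_continuous_real)
  have "integral {c..d} g = integral {c..d} (\<lambda>t. H t * w t) - k * integral {c..d} w"
    using integral_cong[of "{c..d}" g "\<lambda>t. H t * w t - k * w t"] g_cd
      integral_diff[OF int int] H wc
    by (simp add: algebra_simps continuous_intros)
  then have mean: "integral {c..d} g = 0"
    unfolding k_def w_def using integral_bump_pos[OF cd] by simp
  have "integral {c..d} (\<lambda>t. (H t - k)\<^sup>2 * w t) = integral {c..d} (\<lambda>t. H t * g t - k * g t)"
    by (rule integral_cong) (simp add: g_cd power2_eq_square algebra_simps)
  also have "\<dots> = integral {c..d} (\<lambda>t. H t * g t) - k * integral {c..d} g"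
    using H continuous_on_subset[OF gc]
    by (simp add: integral_diff int continuous_intros)
  also have "\<dots> = 0" using orth[OF gc g0 mean] mean by simp
  finally have "\<forall>t\<in>{c..d}. (H t - k)\<^sup>2 * w t = 0"
    using integral_eq_0_iff[of c d "\<lambda>t. (H t - k)\<^sup>2 * w t"] cd H wc bump_nonneg
    by (simp add: w_def continuous_intros)
  then have "H t = k" if "t \<in> {c<..<d}" for t
    using that bump_pos[OF that] by (auto simp: w_def)
  then show ?thesis by (rule that)
qed

lemma du_Bois_Reymond:
  fixes A B :: "real \<Rightarrow> real"
  assumes cd: "c < d" and A: "continuous_on {c..d} A" and B: "continuous_on {c..d} B"
    and test: "\<And>\<phi> \<phi>'. (\<And>t. (\<phi> has_real_derivative \<phi>' t) (at t)) \<Longrightarrow> continuous_on UNIV \<phi>' \<Longrightarrow>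
      (\<And>t. t \<notin> {c<..<d} \<Longrightarrow> \<phi> t = 0 \<and> \<phi>' t = 0) \<Longrightarrow>
      integral {c..d} (\<lambda>t. A t * \<phi> t + B t * \<phi>' t) = 0"
  obtains k where "\<And>t. t \<in> {c<..<d} \<Longrightarrow> B t = integral {c..t} A + k"
proof -
  define G where "G t = integral {c..t} A" for t
  have G: "(G has_real_derivative A t) (at t within {c..d})" if "t \<in> {c..d}" for t
    unfolding G_def using A that by (rule integral_has_real_derivative)
  have Gc: "continuous_on {c..d} G"
    using G by (metis DERIV_continuous continuous_on_eq_continuous_within)
  have orth: "integral {c..d} (\<lambda>t. (B t - G t) * g t) = 0"
    if gc: "continuous_on UNIV g" and g0: "\<And>t. t \<notin> {c<..<d} \<Longrightarrow> g t = 0"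
      and mean: "integral {c..d} g = 0" for g
  proof -
    obtain \<phi> where \<phi>: "\<And>t. (\<phi> has_real_derivative g t) (at t)" "\<And>t. t \<notin> {c<..<d} \<Longrightarrow> \<phi> t = 0"
      using antiderivative_vanishing_outside[OF gc g0 mean] cd by auto
    have \<phi>c: "continuous_on {c..d} \<phi>"
      using \<phi>(1) by (meson DERIV_isCont continuous_at_imp_continuous_on)
    have "((\<lambda>t. A t * \<phi> t + g t * G t) has_integral (G d * \<phi> d - G c * \<phi> c)) {c..d}"
    proof (rule fundamental_theorem_of_calculus)
      show "((\<lambda>t. G t * \<phi> t) has_vector_derivative A t * \<phi> t + g t * G t) (at t within {c..d})"
        if "t \<in> {c..d}" for t
        using DERIV_mult[OF G[OF that] has_field_derivative_at_within[OF \<phi>(1)]]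
        by (simp add: has_real_derivative_iff_has_vector_derivative)
    qed (use cd in simp)
    then have parts: "((\<lambda>t. A t * \<phi> t + G t * g t) has_integral 0) {c..d}"
      using \<phi>(2)[of c] \<phi>(2)[of d] by (simp add: mult.commute)
    have "integral {c..d} (\<lambda>t. A t * \<phi> t + B t * g t) = 0"
      by (rule test[OF \<phi>(1) gc]) (use \<phi>(2) g0 in auto)
    moreover have "(\<lambda>t. A t * \<phi> t + B t * g t) integrable_on {c..d}"
      using A B \<phi>c continuous_on_subset[OF gc subset_UNIV]
      by (intro integrable_continuous_real continuous_intros)
    ultimately have "((\<lambda>t. A t * \<phi> t + B t * g t) has_integral 0) {c..d}"
      using integrable_integral by fastforce
    from has_integral_diff[OF this parts]
    have "((\<lambda>t. (B t - G t) * g t) has_integral 0) {c..d}"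
      by (simp add: algebra_simps)
    then show ?thesis by (rule integral_unique)
  qed
  have "continuous_on {c..d} (\<lambda>t. B t - G t)" using B Gc by (intro continuous_intros)
  then obtain k where "\<And>t. t \<in> {c<..<d} \<Longrightarrow> B t - G t = k"
    using const_if_orthogonal_to_zero_mean[OF cd _ orth] by blast
  then show ?thesis using that[of k] unfolding G_def by (simp add: algebra_simps)
qed

lemma tendsto_integral_local_change:
  fixes f g :: "real \<Rightarrow> real"
  assumes f: "\<And>s. s \<in> {a<..b} \<Longrightarrow> f integrable_on {s..b}"
    and g: "\<And>s. s \<in> {a<..b} \<Longrightarrow> g integrable_on {s..b}"
    and lim: "((\<lambda>s. integral {s..b} f) \<longlongrightarrow> I) (at_right a)"
    and cd: "a < c" "c \<le> d" "d \<le> b"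
    and eq: "\<And>t. t \<in> {a<..b} \<Longrightarrow> t \<notin> {c<..<d} \<Longrightarrow> g t = f t"
  shows "((\<lambda>s. integral {s..b} g) \<longlongrightarrow> I + (integral {c..d} g - integral {c..d} f)) (at_right a)"
proof -
  have split: "integral {s..b} h = integral {s..c} h + integral {c..d} h + integral {d..b} h"
    if "h integrable_on {s..b}" "a < s" "s \<le> c" for h :: "real \<Rightarrow> real" and s
    using that cd integrable_subinterval_real[OF that(1)]
    by (simp add: Henstock_Kurzweil_Integration.integral_combine)
  have "integral {s..b} g = integral {s..b} f + (integral {c..d} g - integral {c..d} f)"
    if s: "a < s" "s \<le> c" for s
  proof -
    have "integral {s..c} g = integral {s..c} f" "integral {d..b} g = integral {d..b} f"
      by (rule integral_cong, use eq s cd in force)+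
    then show ?thesis using split[OF f s] split[OF g s] s cd by simp
  qed
  then have "eventually (\<lambda>s. integral {s..b} f + (integral {c..d} g - integral {c..d} f)
      = integral {s..b} g) (at_right a)"
    using eventually_at_right_real[OF cd(1)] by (auto elim: eventually_mono)
  then show ?thesis by (rule Lim_transform_eventually[OF tendsto_add[OF lim tendsto_const]])
qed

lemma perturbation_positive:
  fixes f g :: "real \<Rightarrow> real"
  assumes K: "compact K" and f: "continuous_on K f" "\<And>t. t \<in> K \<Longrightarrow> f t > 0"
    and g: "continuous_on K g"
  obtains \<delta> where "\<delta> > 0" "\<And>e t. \<bar>e\<bar> \<le> \<delta> \<Longrightarrow> t \<in> K \<Longrightarrow> f t + e * g t > 0"
proof (cases "K = {}")
  case False
  obtain m where m: "m \<in> K" "\<And>t. t \<in> K \<Longrightarrow> f m \<le> f t"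
    using continuous_attains_inf[OF K False f(1)] by blast
  obtain M where M: "\<And>t. t \<in> K \<Longrightarrow> \<bar>g t\<bar> \<le> M"
    using compact_imp_bounded[OF compact_continuous_image[OF g K]]
    by (auto simp: bounded_real)
  define \<delta> where "\<delta> = f m / (2 * (\<bar>M\<bar> + 1))"
  show ?thesis
  proof (rule that)
    show "\<delta> > 0" unfolding \<delta>_def using f(2)[OF m(1)] by simp
    fix e t assume e: "\<bar>e\<bar> \<le> \<delta>" and t: "t \<in> K"
    have "\<bar>e * g t\<bar> \<le> \<delta> * (\<bar>M\<bar> + 1)"
      unfolding abs_mult using e M[OF t] by (intro mult_mono) auto
    also have "\<dots> = f m / 2" unfolding \<delta>_def by (simp add: field_simps)
    also have "\<dots> < f m" using f(2)[OF m(1)] by simp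
    finally show "f t + e * g t > 0" using m(2)[OF t] by linarith
  qed
qed (auto intro: that[of 1])

lemma finite_card_le_1_if_subsingleton:
  assumes "\<And>x y. x \<in> A \<Longrightarrow> y \<in> A \<Longrightarrow> x = y"
  shows "finite A" "card A \<le> 1"
proof -
  have "A = {} \<or> (\<exists>a. A = {a})" using assms by blast
  then show "finite A" "card A \<le> 1" by auto
qed

locale minimiser =
  fixes b \<beta> :: real and \<gamma> :: "real \<Rightarrow> real"
  assumes b_pos: "0 < b" and admissible: "admissible b \<beta> \<gamma>"
    and minimal: "\<And>\<eta>. admissible b \<beta> \<eta> \<Longrightarrow> Lfun b \<gamma> \<le> Lfun b \<eta>"
begin

abbreviation \<gamma>' :: "real \<Rightarrow> real" where "\<gamma>' \<equiv> dcurve b \<gamma>"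

definition Fy :: "real \<Rightarrow> real" where "Fy t = lagrangian_dy (\<gamma> t) (\<gamma>' t)"
definition Fp :: "real \<Rightarrow> real" where "Fp t = lagrangian_dp (\<gamma> t) (\<gamma>' t)"

lemma curve_continuous: "continuous_on {0..b} \<gamma>"
  and curve_differentiable: "\<And>t. t \<in> {0<..b} \<Longrightarrow> \<gamma> differentiable (at t within {0..b})"
  and dcurve_continuous: "continuous_on {0<..b} \<gamma>'"
  and curve_pos: "\<And>t. t \<in> {0<..b} \<Longrightarrow> \<gamma> t > 0"
  and curve_at_0: "\<gamma> 0 = 0" and curve_at_b: "\<gamma> b = \<beta>"
  and improper_integral: "improper_integral_exists b (Lintegrand b \<gamma>)"
  using admissible unfolding admissible_def by auto

lemma curve_continuous_pos: "continuous_on {0<..b} \<gamma>"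
  using curve_continuous by (rule continuous_on_subset) auto

lemma curve_has_vector_derivative: "t \<in> {0<..b} \<Longrightarrow> (\<gamma> has_vector_derivative \<gamma>' t) (at t within {0..b})"
  using curve_differentiable vector_derivative_works unfolding dcurve_def by blast

lemma curve_has_real_derivative: "t \<in> {0<..<b} \<Longrightarrow> (\<gamma> has_real_derivative \<gamma>' t) (at t)"
  using curve_has_vector_derivative[of t] at_within_Icc_at[of 0 t b]
  by (auto simp: has_real_derivative_iff_has_vector_derivative)

lemma continuous_on_Fy: "continuous_on {0<..b} Fy"
  and continuous_on_Fp: "continuous_on {0<..b} Fp"
  unfolding Fy_def[abs_def] Fp_def[abs_def]
  using curve_continuous_pos dcurve_continuous curve_pos
  by (auto intro!: continuous_intros)

context
  fixes \<phi> \<phi>' :: "real \<Rightarrow> real" and c d :: real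
  assumes cd: "0 < c" "c < d" "d \<le> b"
    and \<phi>: "\<And>t. (\<phi> has_real_derivative \<phi>' t) (at t)" and \<phi>': "continuous_on UNIV \<phi>'"
    and support: "\<And>t. t \<notin> {c<..<d} \<Longrightarrow> \<phi> t = 0 \<and> \<phi>' t = 0"
begin

lemma test_continuous: "continuous_on S \<phi>"
  using \<phi> by (meson DERIV_isCont continuous_at_imp_continuous_on)

lemma test_derivative_continuous: "continuous_on S \<phi>'"
  using \<phi>' by (rule continuous_on_subset) simp

lemma perturbation_has_vector_derivative:
  assumes "t \<in> {0<..b}"
  shows "((\<lambda>t. \<gamma> t + e * \<phi> t) has_vector_derivative \<gamma>' t + e * \<phi>' t) (at t within {0..b})"
proof -
  have "(\<gamma> has_real_derivative \<gamma>' t) (at t within {0..b})"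
    using curve_has_vector_derivative[OF assms] by (simp add: has_real_derivative_iff_has_vector_derivative)
  from DERIV_add[OF this DERIV_cmult[OF has_field_derivative_at_within[OF \<phi>]]] show ?thesis
    by (simp add: has_real_derivative_iff_has_vector_derivative)
qed

lemma dcurve_perturbation:
  assumes "t \<in> {0<..b}" shows "dcurve b (\<lambda>t. \<gamma> t + e * \<phi> t) t = \<gamma>' t + e * \<phi>' t"
  unfolding dcurve_def[of b "\<lambda>t. \<gamma> t + e * \<phi> t"]
  by (rule vector_derivative_within_cbox[of 0 b, unfolded cbox_interval])
    (use b_pos assms perturbation_has_vector_derivative[OF assms] in auto)

lemma Lintegrand_perturbation:
  "t \<in> {0<..b} \<Longrightarrow>
    Lintegrand b (\<lambda>t. \<gamma> t + e * \<phi> t) t = lagrangian (\<gamma> t + e * \<phi> t) (\<gamma>' t + e * \<phi>' t)"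
  unfolding Lintegrand_eq_lagrangian dcurve_perturbation ..

context
  fixes e :: real
  assumes perturbation_pos: "\<And>t. t \<in> {0<..b} \<Longrightarrow> \<gamma> t + e * \<phi> t > 0"
begin

lemma continuous_on_Lintegrand_perturbation:
  "continuous_on {0<..b} (Lintegrand b (\<lambda>t. \<gamma> t + e * \<phi> t))"
proof (subst continuous_on_cong[OF refl Lintegrand_perturbation])
  show "continuous_on {0<..b} (\<lambda>t. lagrangian (\<gamma> t + e * \<phi> t) (\<gamma>' t + e * \<phi>' t))"
    using curve_continuous_pos dcurve_continuous perturbation_pos test_continuous
      test_derivative_continuous
    by (intro continuous_intros) auto
qed

lemma tendsto_integral_perturbation:
  obtains I where "((\<lambda>s. integral {s..b} (Lintegrand b \<gamma>)) \<longlongrightarrow> I) (at_right 0)"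
    "((\<lambda>s. integral {s..b} (Lintegrand b (\<lambda>t. \<gamma> t + e * \<phi> t))) \<longlongrightarrow>
      I + (integral {c..d} (\<lambda>t. lagrangian (\<gamma> t + e * \<phi> t) (\<gamma>' t + e * \<phi>' t))
        - integral {c..d} (\<lambda>t. lagrangian (\<gamma> t) (\<gamma>' t)))) (at_right 0)"
proof -
  obtain I where I: "((\<lambda>s. integral {s..b} (Lintegrand b \<gamma>)) \<longlongrightarrow> I) (at_right 0)"
    and int: "\<And>s. s \<in> {0<..b} \<Longrightarrow> Lintegrand b \<gamma> integrable_on {s..b}"
    using improper_integral unfolding improper_integral_exists_def by blast
  have "integral {c..d} (Lintegrand b (\<lambda>t. \<gamma> t + e * \<phi> t))
      = integral {c..d} (\<lambda>t. lagrangian (\<gamma> t + e * \<phi> t) (\<gamma>' t + e * \<phi>' t))"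
    by (rule integral_cong) (use Lintegrand_perturbation cd in auto)
  moreover have "((\<lambda>s. integral {s..b} (Lintegrand b (\<lambda>t. \<gamma> t + e * \<phi> t))) \<longlongrightarrow>
      I + (integral {c..d} (Lintegrand b (\<lambda>t. \<gamma> t + e * \<phi> t)) - integral {c..d} (Lintegrand b \<gamma>)))
      (at_right 0)"
  proof (rule tendsto_integral_local_change[OF int _ I cd(1) less_imp_le[OF cd(2)] cd(3)])
    show "Lintegrand b (\<lambda>t. \<gamma> t + e * \<phi> t) integrable_on {s..b}" if "s \<in> {0<..b}" for s
      using that continuous_on_Lintegrand_perturbation
      by (intro integrable_continuous_real) (auto elim: continuous_on_subset)
    show "Lintegrand b (\<lambda>t. \<gamma> t + e * \<phi> t) t = Lintegrand b \<gamma> t"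
      if "t \<in> {0<..b}" "t \<notin> {c<..<d}" for t
      using Lintegrand_perturbation[OF that(1)] support[OF that(2)]
      by (simp add: Lintegrand_eq_lagrangian)
  qed
  ultimately show ?thesis
    using that I by (simp add: Lintegrand_eq_lagrangian[abs_def])
qed

lemma perturbation_admissible: "admissible b \<beta> (\<lambda>t. \<gamma> t + e * \<phi> t)"
  unfolding admissible_def improper_integral_exists_def
proof (intro conjI ballI)
  show "continuous_on {0..b} (\<lambda>t. \<gamma> t + e * \<phi> t)"
    using curve_continuous test_continuous by (intro continuous_intros)
  show "(\<lambda>t. \<gamma> t + e * \<phi> t) differentiable at t within {0..b}" if "t \<in> {0<..b}" for t
    using perturbation_has_vector_derivative[OF that] by (rule differentiableI_vector)
  show "continuous_on {0<..b} (dcurve b (\<lambda>t. \<gamma> t + e * \<phi> t))"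
    using dcurve_continuous test_derivative_continuous
    by (subst continuous_on_cong[OF refl dcurve_perturbation]) (auto intro!: continuous_intros)
  show "\<gamma> 0 + e * \<phi> 0 = 0" "\<gamma> b + e * \<phi> b = \<beta>"
    using curve_at_0 curve_at_b support[of 0] support[of b] cd by auto
  show "Lintegrand b (\<lambda>t. \<gamma> t + e * \<phi> t) integrable_on {s..b}" if "s \<in> {0<..b}" for s
    using that continuous_on_Lintegrand_perturbation
    by (intro integrable_continuous_real) (auto elim: continuous_on_subset)
  show "\<exists>I. ((\<lambda>s. integral {s..b} (Lintegrand b (\<lambda>t. \<gamma> t + e * \<phi> t))) \<longlongrightarrow> I) (at_right 0)"
    using tendsto_integral_perturbation by blast
qed (use perturbation_pos in simp)

lemma Lfun_perturbation:
  "Lfun b (\<lambda>t. \<gamma> t + e * \<phi> t) = Lfun b \<gamma>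
    + integral {c..d} (\<lambda>t. lagrangian (\<gamma> t + e * \<phi> t) (\<gamma>' t + e * \<phi>' t))
    - integral {c..d} (\<lambda>t. lagrangian (\<gamma> t) (\<gamma>' t))"
proof -
  obtain I where "((\<lambda>s. integral {s..b} (Lintegrand b \<gamma>)) \<longlongrightarrow> I) (at_right 0)"
    "((\<lambda>s. integral {s..b} (Lintegrand b (\<lambda>t. \<gamma> t + e * \<phi> t))) \<longlongrightarrow>
      I + (integral {c..d} (\<lambda>t. lagrangian (\<gamma> t + e * \<phi> t) (\<gamma>' t + e * \<phi>' t))
        - integral {c..d} (\<lambda>t. lagrangian (\<gamma> t) (\<gamma>' t)))) (at_right 0)"
    by (rule tendsto_integral_perturbation)
  from this[THEN tendsto_Lim[OF trivial_limit_at_right_real]] show ?thesis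
    unfolding Lfun_def by simp
qed

end

lemma perturbed_action_has_derivative:
  assumes U: "\<delta> > 0" and pos: "\<And>e t. e \<in> {-\<delta>..\<delta>} \<Longrightarrow> t \<in> {0<..b} \<Longrightarrow> \<gamma> t + e * \<phi> t > 0"
  shows "((\<lambda>e. integral {c..d} (\<lambda>t. lagrangian (\<gamma> t + e * \<phi> t) (\<gamma>' t + e * \<phi>' t)))
    has_field_derivative integral {c..d} (\<lambda>t. Fy t * \<phi> t + Fp t * \<phi>' t)) (at 0)"
proof -
  define U where "U = {-\<delta>..\<delta>}"
  have cd_sub: "{c..d} \<subseteq> {0<..b}" using cd by auto
  have snd: "continuous_on (U \<times> {c..d}) (\<lambda>x. f (snd x))" if "continuous_on {0<..b} f" for f
    by (rule continuous_on_compose2[OF that continuous_on_snd]) (use cd_sub in auto)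
  have "((\<lambda>e. integral (cbox c d) (\<lambda>t. lagrangian (\<gamma> t + e * \<phi> t) (\<gamma>' t + e * \<phi>' t)))
      has_field_derivative integral (cbox c d) (\<lambda>t.
        lagrangian_dy (\<gamma> t + 0 * \<phi> t) (\<gamma>' t + 0 * \<phi>' t) * \<phi> t +
        lagrangian_dp (\<gamma> t + 0 * \<phi> t) (\<gamma>' t + 0 * \<phi>' t) * \<phi>' t)) (at 0 within U)"
  proof (rule leibniz_rule_field_derivative)
    show "((\<lambda>e. lagrangian (\<gamma> t + e * \<phi> t) (\<gamma>' t + e * \<phi>' t)) has_field_derivative
        lagrangian_dy (\<gamma> t + e * \<phi> t) (\<gamma>' t + e * \<phi>' t) * \<phi> t +
        lagrangian_dp (\<gamma> t + e * \<phi> t) (\<gamma>' t + e * \<phi>' t) * \<phi>' t) (at e within U)"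
      if "e \<in> U" "t \<in> cbox c d" for e t
      using that cd_sub by (intro lagrangian_has_derivative_along_line pos) (auto simp: U_def)
    show "(\<lambda>t. lagrangian (\<gamma> t + e * \<phi> t) (\<gamma>' t + e * \<phi>' t)) integrable_on cbox c d"
      if "e \<in> U" for e
      using continuous_on_subset[OF curve_continuous_pos cd_sub]
        continuous_on_subset[OF dcurve_continuous cd_sub] pos[of e] that cd_sub
        test_continuous test_derivative_continuous
      by (auto intro!: integrable_continuous_real continuous_intros simp: U_def)
    show "continuous_on (U \<times> cbox c d) (\<lambda>(e, t).
        lagrangian_dy (\<gamma> t + e * \<phi> t) (\<gamma>' t + e * \<phi>' t) * \<phi> t +
        lagrangian_dp (\<gamma> t + e * \<phi> t) (\<gamma>' t + e * \<phi>' t) * \<phi>' t)"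
      unfolding case_prod_unfold cbox_interval
      using snd[OF curve_continuous_pos] snd[OF dcurve_continuous] snd[OF test_continuous]
        snd[OF test_derivative_continuous] pos cd_sub continuous_on_fst
      by (intro continuous_intros) (auto simp: U_def)
  qed (use U U_def in auto)
  then show ?thesis
    using at_within_Icc_at[of "-\<delta>" 0 \<delta>] U by (simp add: U_def Fy_def Fp_def)
qed

lemma first_variation: "integral {c..d} (\<lambda>t. Fy t * \<phi> t + Fp t * \<phi>' t) = 0"
proof -
  have cd_sub: "{c..d} \<subseteq> {0<..b}" using cd by auto
  obtain \<delta> where \<delta>: "\<delta> > 0" "\<And>e t. \<bar>e\<bar> \<le> \<delta> \<Longrightarrow> t \<in> {c..d} \<Longrightarrow> \<gamma> t + e * \<phi> t > 0"
    using perturbation_positive[of "{c..d}" \<gamma> \<phi>] continuous_on_subset[OF curve_continuous_pos cd_sub]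
      curve_pos cd_sub test_continuous by blast
  have pos: "\<gamma> t + e * \<phi> t > 0" if "e \<in> {-\<delta>..\<delta>}" "t \<in> {0<..b}" for e t
  proof (cases "t \<in> {c..d}")
    case True
    then show ?thesis using \<delta>(2)[of e t] that(1) by (simp add: abs_le_iff)
  next
    case False
    then have "\<phi> t = 0" using support[of t] by auto
    then show ?thesis using curve_pos[OF that(2)] by simp
  qed
  define J where "J e = integral {c..d} (\<lambda>t. lagrangian (\<gamma> t + e * \<phi> t) (\<gamma>' t + e * \<phi>' t))" for e
  have "J 0 \<le> J e" if "\<bar>e\<bar> < \<delta>" for e
  proof -
    have e: "e \<in> {-\<delta>..\<delta>}" using that by auto
    show ?thesis
      using minimal[OF perturbation_admissible[OF pos[OF e]]] Lfun_perturbation[OF pos[OF e]]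
      unfolding J_def by simp
  qed
  moreover have "(J has_field_derivative integral {c..d} (\<lambda>t. Fy t * \<phi> t + Fp t * \<phi>' t)) (at 0)"
    unfolding J_def using \<delta>(1) pos by (rule perturbed_action_has_derivative)
  ultimately show ?thesis
    by (intro DERIV_local_min[OF _ \<delta>(1)]) auto
qed

end

lemma Euler_Lagrange: "t \<in> {0<..<b} \<Longrightarrow> (Fp has_real_derivative Fy t) (at t)"
proof -
  assume t: "t \<in> {0<..<b}"
  define c d where "c = t / 2" and "d = (t + b) / 2"
  have cd: "0 < c" "c < t" "t < d" "d < b" using t by (auto simp: c_def d_def)
  have cd_sub: "{c..d} \<subseteq> {0<..b}" using cd by auto
  have Fy: "continuous_on {c..d} Fy" by (rule continuous_on_subset[OF continuous_on_Fy cd_sub])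
  obtain k where k: "\<And>u. u \<in> {c<..<d} \<Longrightarrow> Fp u = integral {c..u} Fy + k"
  proof (rule du_Bois_Reymond[OF _ Fy continuous_on_subset[OF continuous_on_Fp cd_sub]])
    show "integral {c..d} (\<lambda>t. Fy t * \<phi> t + Fp t * \<phi>' t) = 0"
      if "\<And>t. (\<phi> has_real_derivative \<phi>' t) (at t)" "continuous_on UNIV \<phi>'"
        "\<And>t. t \<notin> {c<..<d} \<Longrightarrow> \<phi> t = 0 \<and> \<phi>' t = 0" for \<phi> \<phi>'
      using first_variation[OF _ _ _ that] cd by simp
  qed (use cd in auto)
  have "((\<lambda>u. integral {c..u} Fy) has_real_derivative Fy t) (at t within {c..d})"
    by (rule integral_has_real_derivative[OF Fy]) (use cd in auto)
  then have "((\<lambda>u. integral {c..u} Fy + k) has_real_derivative Fy t) (at t)"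
    using at_within_Icc_at[of c t d] cd by (auto intro!: derivative_eq_intros)
  then show ?thesis
    by (rule has_field_derivative_transform_within_open[of _ _ _ "{c<..<d}"]) (use cd k in auto)
qed

lemma first_integral:
  obtains C where "C > 0" "\<And>t. t \<in> {0<..<b} \<Longrightarrow> \<gamma> t * (1 + (\<gamma>' t)\<^sup>2) = C"
proof -
  \<comment> \<open>\<open>K = (F - \<gamma>' F\<^sub>p)\<^sup>2\<close> along \<open>\<gamma>\<close>: Beltrami's first integral.\<close>
  define K where "K t = inverse (\<gamma> t) - (Fp t)\<^sup>2" for t
  have K_eq: "K t = 1 / (\<gamma> t * (1 + (\<gamma>' t)\<^sup>2))" if "t \<in> {0<..<b}" for t
    unfolding K_def Fp_def using curve_pos that by (simp add: inverse_minus_lagrangian_dp_sq)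
  have "(K has_real_derivative 0) (at t)" if t: "t \<in> {0<..<b}" for t
  proof -
    have "(K has_real_derivative - (\<gamma>' t * inverse (\<gamma> t ^ 2)) - 2 * (Fy t * Fp t)) (at t)"
      unfolding K_def
      using DERIV_diff[OF DERIV_inverse_fun[OF curve_has_real_derivative[OF t]]
          DERIV_mult[OF Euler_Lagrange[OF t] Euler_Lagrange[OF t]]] curve_pos[of t] t
      by (simp add: power2_eq_square algebra_simps)
    also have "Fy t * Fp t = - \<gamma>' t / (2 * (\<gamma> t)\<^sup>2)"
      unfolding Fy_def Fp_def using curve_pos t by (simp add: lagrangian_dy_mult_dp)
    finally show ?thesis by (simp add: inverse_eq_divide)
  qed
  then have "K t = K (b / 2)" if "t \<in> {0<..<b}" for t
    using that b_pos by (intro DERIV_isconst3[of 0 b]) auto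
  then have "\<gamma> t * (1 + (\<gamma>' t)\<^sup>2) = \<gamma> (b / 2) * (1 + (\<gamma>' (b / 2))\<^sup>2)" if "t \<in> {0<..<b}" for t
    using that K_eq[OF that] K_eq[of "b / 2"] b_pos by simp
  moreover have "\<gamma> (b / 2) * (1 + (\<gamma>' (b / 2))\<^sup>2) > 0"
    using curve_pos[of "b / 2"] b_pos by (simp add: one_plus_square_pos)
  ultimately show ?thesis using that by blast
qed

lemma Fp_strict_decreasing:
  assumes "0 < s" "s < t" "t < b" shows "Fp t < Fp s"
proof (rule DERIV_neg_imp_decreasing_open[OF assms(2)])
  show "\<exists>y. (Fp has_real_derivative y) (at x) \<and> y < 0" if "s < x" "x < t" for x
    using that assms Euler_Lagrange[of x] lagrangian_dy_neg[OF curve_pos[of x]]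
    unfolding Fy_def by auto
  show "continuous_on {s..t} Fp"
    by (rule continuous_on_subset[OF continuous_on_Fp]) (use assms in auto)
qed

lemma dcurve_strict_decreasing_open:
  assumes "0 < s" "s < t" "t < b" shows "\<gamma>' t < \<gamma>' s"
proof -
  obtain C where C: "C > 0" "\<And>t. t \<in> {0<..<b} \<Longrightarrow> \<gamma> t * (1 + (\<gamma>' t)\<^sup>2) = C"
    using first_integral by blast
  have "\<gamma>' u = Fp u * sqrt C" if "u \<in> {0<..<b}" for u
    using lagrangian_dp_mult_sqrt[OF curve_pos, of u "\<gamma>' u"] C(2)[OF that] that
    unfolding Fp_def by simp
  then show ?thesis using Fp_strict_decreasing[OF assms] C(1) assms by simp
qed

lemma dcurve_strict_decreasing:
  assumes "0 < s" "s < t" "t \<le> b" shows "\<gamma>' t < \<gamma>' s"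
proof (cases "t = b")
  case True
  define m where "m = (s + b) / 2"
  have m: "s < m" "m < b" using assms True by (auto simp: m_def)
  have "(\<gamma>' \<longlongrightarrow> \<gamma>' b) (at b within {m..b})"
    using continuous_on_subset[OF dcurve_continuous, of "{m..b}"] m assms
    unfolding continuous_on_def by fastforce
  then have "(\<gamma>' \<longlongrightarrow> \<gamma>' b) (at_left b)"
    using at_within_Icc_at_left[of m b] m by simp
  moreover have "eventually (\<lambda>u. \<gamma>' u \<le> \<gamma>' m) (at_left b)"
    using eventually_at_left_real[OF m(2)]
    by eventually_elim (use m assms dcurve_strict_decreasing_open[of m] in fastforce)
  ultimately have "\<gamma>' b \<le> \<gamma>' m" by (rule tendsto_upperbound) simp
  then show ?thesis using dcurve_strict_decreasing_open[of s m] assms m True by simp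
qed (use assms dcurve_strict_decreasing_open in auto)

lemma strict_increasing_if_dcurve_pos:
  assumes "0 \<le> s" "s < t" "t \<le> b" "\<And>x. x \<in> {s<..<t} \<Longrightarrow> \<gamma>' x > 0"
  shows "\<gamma> s < \<gamma> t"
proof (rule DERIV_pos_imp_increasing_open[OF assms(2)])
  show "\<exists>y. (\<gamma> has_real_derivative y) (at x) \<and> y > 0" if "s < x" "x < t" for x
    using that assms curve_has_real_derivative[of x] by auto
  show "continuous_on {s..t} \<gamma>" by (rule continuous_on_subset[OF curve_continuous]) (use assms in auto)
qed

lemma strict_decreasing_if_dcurve_neg:
  assumes "0 \<le> s" "s < t" "t \<le> b" "\<And>x. x \<in> {s<..<t} \<Longrightarrow> \<gamma>' x < 0"
  shows "\<gamma> s > \<gamma> t"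
proof (rule DERIV_neg_imp_decreasing_open[OF assms(2)])
  show "\<exists>y. (\<gamma> has_real_derivative y) (at x) \<and> y < 0" if "s < x" "x < t" for x
    using that assms curve_has_real_derivative[of x] by auto
  show "continuous_on {s..t} \<gamma>" by (rule continuous_on_subset[OF curve_continuous]) (use assms in auto)
qed

lemma dcurve_tendsto_at_top: "filterlim \<gamma>' at_top (at_right 0)"
  unfolding filterlim_at_top
proof
  fix Z :: real
  obtain C where C: "C > 0" "\<And>t. t \<in> {0<..<b} \<Longrightarrow> \<gamma> t * (1 + (\<gamma>' t)\<^sup>2) = C"
    using first_integral by blast
  define h where "h = b / 2"
  have h: "0 < h" "h < b" using b_pos by (auto simp: h_def)
  \<comment> \<open>\<open>\<gamma>' \<ge> \<gamma>' h\<close> on \<open>(0, h)\<close>, and \<open>\<gamma>'\<^sup>2 = C / \<gamma> - 1\<close> is large where \<open>\<gamma>\<close> is small.\<close>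
  define M where "M = max Z 0 + \<bar>\<gamma>' h\<bar> + 1"
  have "(\<gamma> \<longlongrightarrow> 0) (at_right 0)"
    using curve_continuous b_pos curve_at_0 at_within_Icc_at_right[of 0 b]
    unfolding continuous_on_def by (metis atLeastAtMost_iff less_imp_le order_refl)
  then have "eventually (\<lambda>u. \<gamma> u < C / (1 + M\<^sup>2)) (at_right 0)"
    using C(1) one_plus_square_pos[of M] by (intro order_tendstoD(2)) auto
  then show "eventually (\<lambda>u. Z \<le> \<gamma>' u) (at_right 0)"
    using eventually_at_right_real[OF h(1)]
  proof eventually_elim
    case (elim u)
    then have u: "u \<in> {0<..<b}" using h by auto
    have "\<gamma> u * (1 + M\<^sup>2) < \<gamma> u * (1 + (\<gamma>' u)\<^sup>2)"
      using elim C(2)[OF u] one_plus_square_pos[of M] by (simp add: pos_less_divide_eq)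
    then have "M\<^sup>2 < (\<gamma>' u)\<^sup>2" using curve_pos[of u] u by simp
    moreover have "- M < \<gamma>' u"
      using dcurve_strict_decreasing_open[of u h] elim h by (simp add: M_def)
    moreover have "M < \<bar>\<gamma>' u\<bar>"
      using power2_less_imp_less[of M "\<bar>\<gamma>' u\<bar>"] \<open>M\<^sup>2 < (\<gamma>' u)\<^sup>2\<close> by simp
    ultimately have "M < \<gamma>' u" by linarith
    then show ?case by (simp add: M_def)
  qed
qed

lemma dcurve_pos_before_critical: "\<gamma>' m = 0 \<Longrightarrow> m \<le> b \<Longrightarrow> x \<in> {0<..<m} \<Longrightarrow> \<gamma>' x > 0"
  using dcurve_strict_decreasing[of x m] by simp

lemma dcurve_neg_after_critical: "\<gamma>' m = 0 \<Longrightarrow> 0 < m \<Longrightarrow> x \<in> {m<..b} \<Longrightarrow> \<gamma>' x < 0"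
  using dcurve_strict_decreasing[of m x] by simp

lemma dcurve_pos_if_no_critical:
  assumes no_crit: "\<And>x. x \<in> {0<..<b} \<Longrightarrow> \<gamma>' x \<noteq> 0" and x: "x \<in> {0<..<b}"
  shows "\<gamma>' x > 0"
proof (rule ccontr)
  assume "\<not> \<gamma>' x > 0"
  have "eventually (\<lambda>u. 0 \<le> \<gamma>' u) (at_right 0)"
    using dcurve_tendsto_at_top unfolding filterlim_at_top by blast
  moreover have "eventually (\<lambda>u. u \<in> {0<..<x}) (at_right 0)"
    using eventually_at_right_real[of 0 x] x by simp
  ultimately have "eventually (\<lambda>u. u \<in> {0<..<x} \<and> 0 \<le> \<gamma>' u) (at_right 0)"
    by eventually_elim simp
  then obtain u where u: "u \<in> {0<..<x}" "0 \<le> \<gamma>' u"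
    using eventually_happens[of _ "at_right (0::real)"] trivial_limit_at_right_real by blast
  have "continuous_on {u..x} \<gamma>'"
    by (rule continuous_on_subset[OF dcurve_continuous]) (use u x in auto)
  then obtain z where "u \<le> z" "z \<le> x" "\<gamma>' z = 0"
    using IVT2'[of \<gamma>' x 0 u] u \<open>\<not> \<gamma>' x > 0\<close> by auto
  then show False using no_crit[of z] u x by auto
qed

lemma increasing_or_unimodal:
  "(\<forall>s\<in>{0..b}. \<forall>t\<in>{0..b}. s < t \<longrightarrow> \<gamma> s < \<gamma> t) \<or>
   (\<exists>m\<in>{0<..<b}. (\<forall>s\<in>{0..m}. \<forall>t\<in>{0..m}. s < t \<longrightarrow> \<gamma> s < \<gamma> t) \<and>
                  (\<forall>s\<in>{m..b}. \<forall>t\<in>{m..b}. s < t \<longrightarrow> \<gamma> s > \<gamma> t))"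
proof (cases "\<exists>m\<in>{0<..<b}. \<gamma>' m = 0")
  case True
  then obtain m where m: "m \<in> {0<..<b}" "\<gamma>' m = 0" by blast
  have "\<gamma> s < \<gamma> t" if "s \<in> {0..m}" "t \<in> {0..m}" "s < t" for s t
    using that m dcurve_pos_before_critical[OF m(2)]
    by (intro strict_increasing_if_dcurve_pos) auto
  moreover have "\<gamma> s > \<gamma> t" if "s \<in> {m..b}" "t \<in> {m..b}" "s < t" for s t
    using that m dcurve_neg_after_critical[OF m(2)]
    by (intro strict_decreasing_if_dcurve_neg) auto
  ultimately show ?thesis using m(1) by blast
next
  case False
  then have "\<gamma> s < \<gamma> t" if "s \<in> {0..b}" "t \<in> {0..b}" "s < t" for s t
    using that dcurve_pos_if_no_critical by (intro strict_increasing_if_dcurve_pos) auto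
  then show ?thesis by blast
qed

lemma not_constant_on_interval:
  "\<forall>c e. 0 \<le> c \<and> c < e \<and> e \<le> b \<longrightarrow> \<not> (\<forall>t\<in>{c..e}. \<gamma> t = \<gamma> c)"
proof (intro allI impI notI)
  fix c e assume ce: "0 \<le> c \<and> c < e \<and> e \<le> b" and const: "\<forall>t\<in>{c..e}. \<gamma> t = \<gamma> c"
  from increasing_or_unimodal show False
  proof (elim disjE bexE conjE)
    assume inc: "\<forall>s\<in>{0..b}. \<forall>t\<in>{0..b}. s < t \<longrightarrow> \<gamma> s < \<gamma> t"
    have "c \<in> {0..b}" "e \<in> {0..b}" "e \<in> {c..e}" using ce by auto
    with inc const ce show False by (metis less_irrefl)
  next
    fix m assume m: "m \<in> {0<..<b}" and inc: "\<forall>s\<in>{0..m}. \<forall>t\<in>{0..m}. s < t \<longrightarrow> \<gamma> s < \<gamma> t"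
      and dec: "\<forall>s\<in>{m..b}. \<forall>t\<in>{m..b}. s < t \<longrightarrow> \<gamma> s > \<gamma> t"
    show False
    proof (cases "c < m")
      case True
      then have "c \<in> {0..m}" "min e m \<in> {0..m}" "c < min e m" "min e m \<in> {c..e}"
        using ce m by auto
      with inc const show False by (metis less_irrefl)
    next
      case False
      then have "c \<in> {m..b}" "e \<in> {m..b}" "e \<in> {c..e}" using ce by auto
      with dec const ce show False by (metis less_irrefl)
    qed
  qed
qed

lemma critical_point_unique_max:
  "finite {t\<in>{0<..b}. \<gamma>' t = 0} \<and> card {t\<in>{0<..b}. \<gamma>' t = 0} \<le> 1 \<and>
   (\<forall>t\<in>{0<..b}. \<gamma>' t = 0 \<longrightarrow> (\<forall>s\<in>{0..b}. \<gamma> s \<le> \<gamma> t))"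
proof (intro conjI ballI impI)
  have unique: "s = t" if "s \<in> {t\<in>{0<..b}. \<gamma>' t = 0}" "t \<in> {t\<in>{0<..b}. \<gamma>' t = 0}" for s t
  proof (rule ccontr)
    assume "s \<noteq> t"
    then consider "s < t" | "t < s" by linarith
    then show False
      using that dcurve_strict_decreasing[of s t] dcurve_strict_decreasing[of t s] by cases auto
  qed
  show "finite {t\<in>{0<..b}. \<gamma>' t = 0}" "card {t\<in>{0<..b}. \<gamma>' t = 0} \<le> 1"
    using finite_card_le_1_if_subsingleton[OF unique] by blast+
next
  fix t s assume t: "t \<in> {0<..b}" "\<gamma>' t = 0" and s: "s \<in> {0..b}"
  consider "s < t" | "s = t" | "t < s" by linarith
  then show "\<gamma> s \<le> \<gamma> t"
  proof cases
    case 1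
    have "\<gamma> s < \<gamma> t"
      by (rule strict_increasing_if_dcurve_pos) (use 1 s t dcurve_pos_before_critical[OF t(2)] in auto)
    then show ?thesis by simp
  next
    case 3
    have "\<gamma> t > \<gamma> s"
      by (rule strict_decreasing_if_dcurve_neg) (use 3 s t dcurve_neg_after_critical[OF t(2)] in auto)
    then show ?thesis by simp
  qed simp
qed

end

theorem proposition3:
  fixes b \<beta> :: real and \<gamma> :: "real \<Rightarrow> real"
  assumes "b > 0" and "\<beta> > 0"
    and "admissible b \<beta> \<gamma>"
    and "\<forall>\<eta>. admissible b \<beta> \<eta> \<longrightarrow> Lfun b \<gamma> \<le> Lfun b \<eta>"
  shows "filterlim (dcurve b \<gamma>) at_top (at_right 0) \<and>
    (\<forall>c e. 0 \<le> c \<and> c < e \<and> e \<le> b \<longrightarrow> \<not> (\<forall>t\<in>{c..e}. \<gamma> t = \<gamma> c)) \<and>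
    (finite {t\<in>{0<..b}. dcurve b \<gamma> t = 0} \<and> card {t\<in>{0<..b}. dcurve b \<gamma> t = 0} \<le> 1 \<and>
     (\<forall>t\<in>{0<..b}. dcurve b \<gamma> t = 0 \<longrightarrow> (\<forall>s\<in>{0..b}. \<gamma> s \<le> \<gamma> t))) \<and>
    ((\<forall>s\<in>{0..b}. \<forall>t\<in>{0..b}. s < t \<longrightarrow> \<gamma> s < \<gamma> t) \<or>
     (\<exists>m\<in>{0<..<b}. (\<forall>s\<in>{0..m}. \<forall>t\<in>{0..m}. s < t \<longrightarrow> \<gamma> s < \<gamma> t) \<and>
                    (\<forall>s\<in>{m..b}. \<forall>t\<in>{m..b}. s < t \<longrightarrow> \<gamma> s > \<gamma> t))) \<and>
    (\<forall>s t. 0 < s \<and> s < t \<and> t < b \<longrightarrow> dcurve b \<gamma> t < dcurve b \<gamma> s)"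
proof -
  interpret minimiser b \<beta> \<gamma>
    using assms by unfold_locales auto
  show ?thesis
    by (rule conjI[OF dcurve_tendsto_at_top conjI[OF not_constant_on_interval
          conjI[OF critical_point_unique_max conjI[OF increasing_or_unimodal]]]])
      (use dcurve_strict_decreasing_open in blast)
qed

end
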